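(* There is an absolute constant $C$ such that the following holds. For $i\in\{1,2,3,4\}$ and $j\in\{1,2,3\}$ write $i\subset j$ if $i=j$, or if $i=4$ and $j=3$; write $i\not\subset j$ otherwise. Let $I_1,\dots,I_4\subset\mathbb{R}$ be intervals, let $\tau,\alpha,\beta>0$, and let $h_1,h_2,h_3:\mathbb{R}\to\mathbb{C}$ be measurable functions satisfying $$\int_{I_i}|h_j|\le\alpha\quad\text{whenever } i\subset j,$$ and, whenever $i\not\subset j$, $h_j$ is $C^2$ on $I_i+[-\tau,\tau]$ with $|h_j(x)|=1$, $|h_j'(x)|\le\beta$, $|h_j''(x)|\le\beta^2$ for all $x\in I_i+[-\tau,\tau]$ (Minkowski set addition). Let $t_1,t_2$ be independent random variables uniformly distributed on $[0,\tau]$, let $t_3=t_4=0$, and set $f(x)=f_{t_1,t_2}(x):=h_1(x-t_1)h_2(x-t_2)h_3(x)$. Then for every real $m\ne0$, $$\left|\mathbb{E}\Big(\prod_{i=1}^{4}\int_{I_i+t_i}f(x_i)e^{-imx_i}\,dx_i\Big)\right|\le C\frac{\alpha^4}{m^2}\Big(\max\big(\beta,\tfrac1\tau\big)\Big)^2.$$ *)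

theory Defs
  imports "HOL-Probability.Probability"
begin

definition idx_sub :: "nat \<Rightarrow> nat \<Rightarrow> bool" where
  "idx_sub i j \<longleftrightarrow> i = j \<or> (i = 4 \<and> j = 3)"

definition thicken :: "real set \<Rightarrow> real \<Rightarrow> real set" where
  "thicken I \<tau> = {x + s | x s. x \<in> I \<and> s \<in> {-\<tau>..\<tau>}}"

definition C2_unimod_on :: "(real \<Rightarrow> complex) \<Rightarrow> real set \<Rightarrow> real \<Rightarrow> bool" where
  "C2_unimod_on h S \<beta> \<longleftrightarrow>
     (\<exists>h' h''. continuous_on S h'' \<and>
       (\<forall>x\<in>S. (h has_vector_derivative h' x) (at x within S)
             \<and> (h' has_vector_derivative h'' x) (at x within S)
             \<and> norm (h x) = 1 \<and> norm (h' x) \<le> \<beta> \<and> norm (h'' x) \<le> \<beta>\<^sup>2))"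

definition tshift :: "real \<Rightarrow> real \<Rightarrow> nat \<Rightarrow> real" where
  "tshift t1 t2 i = (if i = 1 then t1 else if i = 2 then t2 else 0)"

definition fprod :: "(nat \<Rightarrow> real \<Rightarrow> complex) \<Rightarrow> real \<Rightarrow> real \<Rightarrow> real \<Rightarrow> complex" where
  "fprod h t1 t2 x = h 1 (x - t1) * h 2 (x - t2) * h 3 x"

end

theory Submission
  imports Defs
begin

text \<open>
  Write \<open>t = (a, s)\<close> for the two random shifts. For \<open>z \<in> I\<^sub>i\<close> the integrand at \<open>x = z + t\<^sub>i\<close>
  factors as \<open>h\<^sub>j(z) exp(-imz)\<close>, with \<open>i \<subset> j\<close> (this factor is merely integrable), times
  \<open>exp(-imt\<^sub>i)\<close>, times a cofactor formed by the two other \<open>h\<close>'s, which are unimodular and \<open>C\<^sup>2\<close>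
  near \<open>I\<^sub>i\<close>. By Fubini the expectation becomes an integral over \<open>z \<in> I\<^sub>1 \<times> \<dots> \<times> I\<^sub>4\<close> of
  \<open>\<Prod>\<^sub>i |h\<^sub>j(z\<^sub>i)|\<close> times the expectation over \<open>(a, s)\<close> of \<open>exp(-ima) exp(-ims) G(a, s)\<close>,
  where \<open>G\<close>, the product of the four cofactors, is bounded by 1, \<open>8\<beta>\<close>-Lipschitz in each shift
  and has mixed second differences at most \<open>(8\<beta>)\<^sup>2 |\<Delta>a| |\<Delta>s|\<close>. Comparing an oscillatory
  integral over \<open>[0, \<tau>]\<close> with its translate by half a period \<open>\<pi>/|m|\<close> gains a factor
  \<open>\<pi>/|m| (1/\<tau> + 4\<beta>)\<close> for each shift, and \<open>1/\<tau> + 4\<beta> \<le> 5 max \<beta> (1/\<tau>)\<close>, so \<open>C = 25\<pi>\<^sup>2\<close>.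
\<close>

section \<open>Oscillatory integrals\<close>

definition wave :: "real \<Rightarrow> real \<Rightarrow> complex" where
  "wave m x = exp (- \<i> * complex_of_real (m * x))"

lemma wave_add: "wave m (x + y) = wave m x * wave m y"
  unfolding wave_def by (simp add: distrib_left exp_add[symmetric] algebra_simps)

lemma wave_0 [simp]: "wave m 0 = 1"
  by (simp add: wave_def)

lemma norm_wave [simp]: "norm (wave m x) = 1"
  by (simp add: wave_def)

lemma continuous_on_wave [continuous_intros]: "continuous_on S (wave m)"
  unfolding wave_def by (intro continuous_intros)

lemma borel_measurable_wave [measurable]: "wave m \<in> borel_measurable borel"
  by (intro borel_measurable_continuous_onI continuous_on_wave)

lemma wave_add_half_period:
  assumes "m \<noteq> 0"
  shows "wave m (t + pi / \<bar>m\<bar>) = - wave m t"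
proof -
  have "wave m (pi / \<bar>m\<bar>) = exp (- (sgn m * pi) * \<i>)"
    using assms by (simp add: wave_def abs_if mult.commute)
  also have "\<dots> = -1"
    using assms by (auto simp: sgn_if exp_minus)
  finally show ?thesis by (simp add: wave_add)
qed

lemma integral_wave_half_period_identity:
  fixes u :: "real \<Rightarrow> complex"
  assumes m: "m \<noteq> 0" and le: "\<delta> \<le> \<tau>" and \<delta>: "\<delta> = pi / \<bar>m\<bar>" and u: "continuous_on {0..\<tau>} u"
  shows "2 * integral {0..\<tau>} (\<lambda>t. wave m t * u t)
           = integral {0..\<tau> - \<delta>} (\<lambda>s. wave m s * (u s - u (s + \<delta>)))
             + integral {\<tau> - \<delta>..\<tau>} (\<lambda>t. wave m t * u t) + integral {0..\<delta>} (\<lambda>t. wave m t * u t)"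
proof -
  define k where "k t = wave m t * u t" for t
  define v where "v s = wave m s * u (s + \<delta>)" for s
  have delta: "\<delta> > 0" using m by (simp add: \<delta>)
  have k: "continuous_on {0..\<tau>} k" unfolding k_def by (intro continuous_intros u)
  have "continuous_on {0..\<tau> - \<delta>} (\<lambda>s. u (s + \<delta>))"
    by (rule continuous_on_compose2[OF u]) (use delta in \<open>auto intro!: continuous_intros\<close>)
  then have v: "continuous_on {0..\<tau> - \<delta>} v" unfolding v_def by (intro continuous_intros)
  have shift: "integral {\<delta>..\<tau>} k = - integral {0..\<tau> - \<delta>} v"
  proof -
    have "integral {0..\<tau> - \<delta>} (k \<circ> (+) \<delta>) = integral {0 + \<delta>..\<tau> - \<delta> + \<delta>} k"
      by (rule integral_shift_Icc_real)
    moreover have "k \<circ> (+) \<delta> = (\<lambda>s. - v s)"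
      by (auto simp: k_def v_def \<delta> wave_add_half_period[OF m] add.commute)
    ultimately show ?thesis by (simp add: integral_neg)
  qed
  have split: "integral {0..\<tau>} k = integral {0..c} k + integral {c..\<tau>} k" if "0 \<le> c" "c \<le> \<tau>" for c
    using that by (intro Henstock_Kurzweil_Integration.integral_combine[symmetric]
        integrable_continuous_interval k) auto
  have "(\<lambda>s. wave m s * (u s - u (s + \<delta>))) = (\<lambda>s. k s - v s)"
    by (simp add: k_def v_def right_diff_distrib)
  then show ?thesis
    using split[of "\<tau> - \<delta>"] split[of \<delta>] shift le delta
    by (simp add: k_def[symmetric], subst integral_diff)
      (auto intro!: integrable_continuous_interval continuous_on_subset[OF k] v simp: algebra_simps)
qed

text \<open>The identity above cancels the integrand against its translate by half a period of the
  wave, up to the variation of \<open>u\<close> over that distance and two boundary pieces.\<close>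
lemma norm_integral_wave_le:
  fixes u :: "real \<Rightarrow> complex"
  assumes tau: "\<tau> > 0" and m: "m \<noteq> 0"
    and bound: "\<And>t. t \<in> {0..\<tau>} \<Longrightarrow> norm (u t) \<le> A"
    and lip: "L-lipschitz_on {0..\<tau>} u"
  shows "norm (integral {0..\<tau>} (\<lambda>t. wave m t * u t)) \<le> pi / \<bar>m\<bar> * (A + \<tau> * L / 2)"
proof -
  define \<delta> where "\<delta> = pi / \<bar>m\<bar>"
  define k where "k = (\<lambda>t. wave m t * u t)"
  have delta: "\<delta> > 0" using m by (simp add: \<delta>_def)
  have A: "A \<ge> 0" using bound[of 0] tau by (auto intro: order_trans[OF norm_ge_zero])
  have L: "L \<ge> 0" using lip by (rule lipschitz_on_nonneg)
  have u: "continuous_on {0..\<tau>} u" using lip by (rule lipschitz_on_continuous_on)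
  have k: "continuous_on {0..\<tau>} k" unfolding k_def by (intro continuous_intros u)
  have k_bound: "norm (integral {a..b} k) \<le> A * (b - a)" if "0 \<le> a" "a \<le> b" "b \<le> \<tau>" for a b
    using that by (intro integral_bound continuous_on_subset[OF k]) (auto simp: k_def norm_mult bound)
  show ?thesis
  proof (cases "\<tau> \<le> \<delta>")
    case True
    have "norm (integral {0..\<tau>} k) \<le> A * \<tau>" using k_bound[of 0 \<tau>] tau by simp
    also have "\<dots> \<le> \<delta> * (A + \<tau> * L / 2)"
      using True A L tau delta by (simp add: algebra_simps mult_left_mono add_increasing2)
    finally show ?thesis by (simp add: k_def \<delta>_def)
  next
    case False
    let ?D = "\<lambda>s. wave m s * (u s - u (s + \<delta>))"
    have "2 * norm (integral {0..\<tau>} k)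
        = norm (integral {0..\<tau> - \<delta>} ?D + integral {\<tau> - \<delta>..\<tau>} k + integral {0..\<delta>} k)"
      using integral_wave_half_period_identity[OF m _ \<delta>_def u] False
      by (simp add: k_def flip: norm_mult_numeral1)
    also have "\<dots> \<le> norm (integral {0..\<tau> - \<delta>} ?D) + norm (integral {\<tau> - \<delta>..\<tau>} k)
        + norm (integral {0..\<delta>} k)"
      by (intro norm_triangle_le add_right_mono norm_triangle_ineq)
    also have "\<dots> \<le> L * \<delta> * (\<tau> - \<delta>) + A * \<delta> + A * \<delta>"
    proof (intro add_mono)
      have "norm (?D s) \<le> L * \<delta>" if "s \<in> {0..\<tau> - \<delta>}" for s
        using lipschitz_onD[OF lip, of s "s + \<delta>"] that delta by (simp add: dist_norm norm_mult)
      moreover have "continuous_on {0..\<tau> - \<delta>} ?D"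
        using False delta
        by (intro continuous_intros continuous_on_subset[OF u] continuous_on_compose2[OF u]) auto
      ultimately show "norm (integral {0..\<tau> - \<delta>} ?D) \<le> L * \<delta> * (\<tau> - \<delta>)"
        using integral_bound[of 0 "\<tau> - \<delta>" ?D "L * \<delta>"] False by simp
    qed (use k_bound[of "\<tau> - \<delta>" \<tau>] k_bound[of 0 \<delta>] False delta in auto)
    also have "\<dots> \<le> 2 * (\<delta> * (A + \<tau> * L / 2))"
      using L delta by (simp add: algebra_simps mult_left_mono)
    finally show ?thesis by (simp add: k_def \<delta>_def)
  qed
qed

section \<open>Kernels with mixed Lipschitz bounds\<close>

lemma lipschitz_on_mult_bounded:
  fixes f g :: "'a::metric_space \<Rightarrow> 'b::real_normed_algebra"
  assumes f: "L1-lipschitz_on S f" and g: "L2-lipschitz_on S g"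
    and "0 \<le> B1" "0 \<le> B2"
    and f_bound: "\<And>x. x \<in> S \<Longrightarrow> norm (f x) \<le> B1" and g_bound: "\<And>x. x \<in> S \<Longrightarrow> norm (g x) \<le> B2"
  shows "(B1 * L2 + B2 * L1)-lipschitz_on S (\<lambda>x. f x * g x)"
proof (rule lipschitz_onI)
  fix x y assume xy: "x \<in> S" "y \<in> S"
  have "f x * g x - f y * g y = f x * (g x - g y) + (f x - f y) * g y"
    by (simp add: algebra_simps)
  then have "dist (f x * g x) (f y * g y) \<le> norm (f x) * dist (g x) (g y) + dist (f x) (f y) * norm (g y)"
    by (metis dist_norm norm_mult_ineq norm_triangle_le add_mono)
  also have "\<dots> \<le> B1 * (L2 * dist x y) + (L1 * dist x y) * B2"
    using xy assms lipschitz_on_nonneg[OF f] lipschitz_on_nonneg[OF g]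
    by (intro add_mono mult_mono lipschitz_onD[OF f] lipschitz_onD[OF g]) auto
  finally show "dist (f x * g x) (f y * g y) \<le> (B1 * L2 + B2 * L1) * dist x y"
    by (simp add: algebra_simps)
next
  show "0 \<le> B1 * L2 + B2 * L1"
    using assms lipschitz_on_nonneg[OF f] lipschitz_on_nonneg[OF g] by simp
qed

lemma bounded_vector_derivative_imp_lipschitz:
  fixes f :: "real \<Rightarrow> 'a::real_normed_vector"
  assumes "\<And>x. x \<in> S \<Longrightarrow> (f has_vector_derivative f' x) (at x within S)" "convex S"
    and "\<And>x. x \<in> S \<Longrightarrow> norm (f' x) \<le> C" "0 \<le> C"
  shows "C-lipschitz_on S f"
  using assms
  by (intro bounded_derivative_imp_lipschitz[where f' = "\<lambda>x t. t *\<^sub>R f' x"])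
    (auto simp: has_vector_derivative_def onorm_scaleR_left onorm_id)

definition mixed_lipschitz :: "real \<Rightarrow> real \<Rightarrow> (real \<Rightarrow> real \<Rightarrow> complex) \<Rightarrow> bool" where
  "mixed_lipschitz \<tau> L G \<longleftrightarrow>
     (\<forall>a\<in>{0..\<tau>}. \<forall>s\<in>{0..\<tau>}. norm (G a s) \<le> 1) \<and>
     (\<forall>s\<in>{0..\<tau>}. L-lipschitz_on {0..\<tau>} (\<lambda>a. G a s)) \<and>
     (\<forall>a\<in>{0..\<tau>}. L-lipschitz_on {0..\<tau>} (G a)) \<and>
     (\<forall>a\<in>{0..\<tau>}. \<forall>a'\<in>{0..\<tau>}. (L\<^sup>2 * \<bar>a - a'\<bar>)-lipschitz_on {0..\<tau>} (\<lambda>s. G a s - G a' s))"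

lemma mixed_lipschitz_mult:
  assumes F: "mixed_lipschitz \<tau> L1 F" and G: "mixed_lipschitz \<tau> L2 G"
    and "0 \<le> L1" "0 \<le> L2"
  shows "mixed_lipschitz \<tau> (L1 + L2) (\<lambda>a s. F a s * G a s)"
  unfolding mixed_lipschitz_def
proof (intro conjI ballI)
  fix a s assume "a \<in> {0..\<tau>}" "s \<in> {0..\<tau>}"
  then show "norm (F a s * G a s) \<le> 1"
    using F G by (auto simp: mixed_lipschitz_def norm_mult intro: mult_le_one)
next
  fix s assume "s \<in> {0..\<tau>}"
  then have "(1 * L2 + 1 * L1)-lipschitz_on {0..\<tau>} (\<lambda>a. F a s * G a s)"
    using F G by (intro lipschitz_on_mult_bounded) (auto simp: mixed_lipschitz_def)
  then show "(L1 + L2)-lipschitz_on {0..\<tau>} (\<lambda>a. F a s * G a s)" by (simp add: add.commute)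
next
  fix a assume "a \<in> {0..\<tau>}"
  then have "(1 * L2 + 1 * L1)-lipschitz_on {0..\<tau>} (\<lambda>s. F a s * G a s)"
    using F G by (intro lipschitz_on_mult_bounded) (auto simp: mixed_lipschitz_def)
  then show "(L1 + L2)-lipschitz_on {0..\<tau>} (\<lambda>s. F a s * G a s)" by (simp add: add.commute)
next
  fix a a' assume a: "a \<in> {0..\<tau>}" and a': "a' \<in> {0..\<tau>}"
  define d where "d = \<bar>a - a'\<bar>"
  have diff_bound: "norm (H a s - H a' s) \<le> L * d"
    if "mixed_lipschitz \<tau> L H" "s \<in> {0..\<tau>}" for H L s
    using that a a' lipschitz_onD[of L "{0..\<tau>}" "\<lambda>a. H a s" a a']
    by (auto simp: mixed_lipschitz_def d_def dist_norm)
  have "((L1 * d) * L2 + 1 * (L1\<^sup>2 * d))-lipschitz_on {0..\<tau>} (\<lambda>s. (F a s - F a' s) * G a s)"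
    using F G a a' \<open>0 \<le> L1\<close> diff_bound[OF F]
    by (intro lipschitz_on_mult_bounded) (auto simp: mixed_lipschitz_def d_def)
  moreover have "(1 * (L2\<^sup>2 * d) + (L2 * d) * L1)-lipschitz_on {0..\<tau>} (\<lambda>s. F a' s * (G a s - G a' s))"
    using F G a a' \<open>0 \<le> L2\<close> diff_bound[OF G]
    by (intro lipschitz_on_mult_bounded) (auto simp: mixed_lipschitz_def d_def)
  ultimately have "((L1 * d) * L2 + 1 * (L1\<^sup>2 * d) + (1 * (L2\<^sup>2 * d) + (L2 * d) * L1))-lipschitz_on {0..\<tau>}
      (\<lambda>s. (F a s - F a' s) * G a s + F a' s * (G a s - G a' s))"
    by (rule lipschitz_on_add)
  then show "((L1 + L2)\<^sup>2 * \<bar>a - a'\<bar>)-lipschitz_on {0..\<tau>} (\<lambda>s. F a s * G a s - F a' s * G a' s)"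
    by (simp add: d_def power2_eq_square algebra_simps)
qed

lemma mixed_lipschitz_const_one: "mixed_lipschitz \<tau> 0 (\<lambda>a s. 1)"
  by (simp add: mixed_lipschitz_def lipschitz_on_constant)

lemma mixed_lipschitz_prod:
  assumes "finite A" "\<And>i. i \<in> A \<Longrightarrow> mixed_lipschitz \<tau> (L i) (G i)" "\<And>i. i \<in> A \<Longrightarrow> 0 \<le> L i"
  shows "mixed_lipschitz \<tau> (\<Sum>i\<in>A. L i) (\<lambda>a s. \<Prod>i\<in>A. G i a s)"
  using assms
  by (induction A rule: finite_induct) (auto intro!: mixed_lipschitz_mult sum_nonneg mixed_lipschitz_const_one)

lemma has_vector_derivative_translate_within:
  assumes "(f has_vector_derivative f') (at (x + d) within S)" "(\<lambda>z. z + d) ` T \<subseteq> S"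
  shows "((\<lambda>z. f (z + d)) has_vector_derivative f') (at x within T)"
proof -
  have "((\<lambda>z. z + d) has_vector_derivative 1) (at x within T)"
    by (auto intro!: derivative_eq_intros)
  moreover have "(f has_vector_derivative f') (at (x + d) within (\<lambda>z. z + d) ` T)"
    using assms by (rule has_vector_derivative_within_subset)
  ultimately show ?thesis
    using vector_diff_chain_within[of "\<lambda>z. z + d" 1 x T f f'] by (simp add: o_def)
qed

lemma C2_unimod_on_lipschitz:
  assumes "C2_unimod_on \<psi> S \<beta>" "convex S" "0 \<le> \<beta>"
  shows "\<beta>-lipschitz_on S \<psi>"
  using assms unfolding C2_unimod_on_def by (metis bounded_vector_derivative_imp_lipschitz)

lemma C2_unimod_on_second_difference:
  assumes C2: "C2_unimod_on \<psi> S \<beta>" and S: "convex S"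
    and x: "x \<in> S" "x + d \<in> S" and y: "y \<in> S" "y + d \<in> S"
  shows "norm (\<psi> (x + d) - \<psi> x - (\<psi> (y + d) - \<psi> y)) \<le> \<beta>\<^sup>2 * \<bar>d\<bar> * \<bar>x - y\<bar>"
proof -
  obtain \<psi>' \<psi>'' where
    d1: "\<And>x. x \<in> S \<Longrightarrow> (\<psi> has_vector_derivative \<psi>' x) (at x within S)" and
    d2: "\<And>x. x \<in> S \<Longrightarrow> (\<psi>' has_vector_derivative \<psi>'' x) (at x within S)" and
    b2: "\<And>x. x \<in> S \<Longrightarrow> norm (\<psi>'' x) \<le> \<beta>\<^sup>2"
    using C2 unfolding C2_unimod_on_def by metis
  have lip': "(\<beta>\<^sup>2)-lipschitz_on S \<psi>'"
    by (rule bounded_vector_derivative_imp_lipschitz[OF d2 S b2]) simp_all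
  define T where "T = {z \<in> S. z + d \<in> S}"
  have "T = S \<inter> (+) (- d) ` S"
    by (force simp: T_def)
  then have T: "convex T"
    using S by (simp add: convex_Int convex_translation)
  have "(\<beta>\<^sup>2 * \<bar>d\<bar>)-lipschitz_on T (\<lambda>z. \<psi> (z + d) - \<psi> z)"
  proof (rule bounded_vector_derivative_imp_lipschitz[OF _ T])
    fix z assume z: "z \<in> T"
    show "((\<lambda>z. \<psi> (z + d) - \<psi> z) has_vector_derivative \<psi>' (z + d) - \<psi>' z) (at z within T)"
      using z by (intro has_vector_derivative_diff has_vector_derivative_translate_within[OF d1]
          has_vector_derivative_within_subset[OF d1]) (auto simp: T_def)
    show "norm (\<psi>' (z + d) - \<psi>' z) \<le> \<beta>\<^sup>2 * \<bar>d\<bar>"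
      using lipschitz_onD[OF lip', of "z + d" z] z by (simp add: T_def dist_norm)
  qed simp
  from lipschitz_onD[OF this, of x y] x y show ?thesis
    by (simp add: T_def dist_norm mult.assoc)
qed

lemma C2_unimod_on_dist_affine_le:
  assumes C2: "C2_unimod_on \<psi> S \<beta>" and "convex S" "0 \<le> \<beta>" "\<bar>r\<bar> \<le> 1"
    and in_S: "x + r * b \<in> S" "x + r * b' \<in> S"
  shows "dist (\<psi> (x + r * b)) (\<psi> (x + r * b')) \<le> \<beta> * dist b b'"
proof -
  have "\<beta>-lipschitz_on S \<psi>" using C2 assms(2,3) by (rule C2_unimod_on_lipschitz)
  from lipschitz_onD[OF this in_S]
  have "dist (\<psi> (x + r * b)) (\<psi> (x + r * b')) \<le> \<beta> * (\<bar>r\<bar> * \<bar>b - b'\<bar>)"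
    by (simp add: dist_real_def abs_mult flip: right_diff_distrib)
  also have "\<dots> \<le> \<beta> * dist b b'"
    using assms(3,4) by (auto simp: dist_real_def intro!: mult_left_mono mult_left_le_one_le)
  finally show ?thesis .
qed

lemma C2_unimod_on_mixed_difference_affine:
  assumes C2: "C2_unimod_on \<psi> S \<beta>" and S: "convex S" and p: "\<bar>p\<bar> \<le> 1" and q: "\<bar>q\<bar> \<le> 1"
    and in_S: "c + p * a + q * s \<in> S" "c + p * a' + q * s \<in> S"
      "c + p * a + q * s' \<in> S" "c + p * a' + q * s' \<in> S"
  shows "norm (\<psi> (c + p * a + q * s) - \<psi> (c + p * a' + q * s)
           - (\<psi> (c + p * a + q * s') - \<psi> (c + p * a' + q * s'))) \<le> \<beta>\<^sup>2 * \<bar>a - a'\<bar> * \<bar>s - s'\<bar>"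
proof -
  define x y d where "x = c + p * a' + q * s" and "y = c + p * a' + q * s'" and "d = p * (a - a')"
  have xd: "x + d = c + p * a + q * s" and yd: "y + d = c + p * a + q * s'"
    by (simp_all add: x_def y_def d_def algebra_simps)
  have "x \<in> S" "x + d \<in> S" "y \<in> S" "y + d \<in> S"
    using in_S unfolding xd yd by (simp_all add: x_def y_def)
  then have "norm (\<psi> (x + d) - \<psi> x - (\<psi> (y + d) - \<psi> y)) \<le> \<beta>\<^sup>2 * \<bar>d\<bar> * \<bar>x - y\<bar>"
    by (rule C2_unimod_on_second_difference[OF C2 S])
  also have "\<dots> = \<beta>\<^sup>2 * (\<bar>p\<bar> * \<bar>a - a'\<bar>) * (\<bar>q\<bar> * \<bar>s - s'\<bar>)"
    by (simp add: x_def y_def d_def abs_mult flip: right_diff_distrib)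
  also have "\<dots> \<le> \<beta>\<^sup>2 * \<bar>a - a'\<bar> * \<bar>s - s'\<bar>"
    using p q by (intro mult_mono[OF mult_left_mono] mult_left_le_one_le) auto
  finally show ?thesis
    unfolding xd[symmetric] yd[symmetric] x_def[symmetric] y_def[symmetric] .
qed

lemma mixed_lipschitz_C2_unimod_affine:
  assumes C2: "C2_unimod_on \<psi> S \<beta>" and S: "convex S" and "0 \<le> \<beta>"
    and p: "\<bar>p\<bar> \<le> 1" and q: "\<bar>q\<bar> \<le> 1"
    and in_S: "\<And>a s. a \<in> {0..\<tau>} \<Longrightarrow> s \<in> {0..\<tau>} \<Longrightarrow> c + p * a + q * s \<in> S"
  shows "mixed_lipschitz \<tau> \<beta> (\<lambda>a s. \<psi> (c + p * a + q * s))"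
  unfolding mixed_lipschitz_def
proof (intro conjI ballI)
  note dist_le = C2_unimod_on_dist_affine_le[OF C2 S \<open>0 \<le> \<beta>\<close>]
  fix a s assume a: "a \<in> {0..\<tau>}" and s: "s \<in> {0..\<tau>}"
  show "norm (\<psi> (c + p * a + q * s)) \<le> 1"
    using C2 in_S[OF a s] by (auto simp: C2_unimod_on_def)
  show "\<beta>-lipschitz_on {0..\<tau>} (\<lambda>a. \<psi> (c + p * a + q * s))"
  proof (rule lipschitz_onI)
    fix b b' assume "b \<in> {0..\<tau>}" "b' \<in> {0..\<tau>}"
    then show "dist (\<psi> (c + p * b + q * s)) (\<psi> (c + p * b' + q * s)) \<le> \<beta> * dist b b'"
      using dist_le[OF p, of "c + q * s" b b'] in_S[OF _ s, of b] in_S[OF _ s, of b'] by (simp add: ac_simps)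
  qed fact
  show "\<beta>-lipschitz_on {0..\<tau>} (\<lambda>s. \<psi> (c + p * a + q * s))"
  proof (rule lipschitz_onI)
    fix b b' assume "b \<in> {0..\<tau>}" "b' \<in> {0..\<tau>}"
    then show "dist (\<psi> (c + p * a + q * b)) (\<psi> (c + p * a + q * b')) \<le> \<beta> * dist b b'"
      using dist_le[OF q, of "c + p * a" b b'] in_S[OF a, of b] in_S[OF a, of b'] by (simp add: ac_simps)
  qed fact
next
  fix a a' assume a: "a \<in> {0..\<tau>}" and a': "a' \<in> {0..\<tau>}"
  show "(\<beta>\<^sup>2 * \<bar>a - a'\<bar>)-lipschitz_on {0..\<tau>} (\<lambda>s. \<psi> (c + p * a + q * s) - \<psi> (c + p * a' + q * s))"
    using a a' in_S
    by (intro lipschitz_onI) (auto simp: dist_norm dist_real_def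
        intro!: C2_unimod_on_mixed_difference_affine[OF C2 S p q])
qed

lemma continuous_on_mixed_lipschitz:
  assumes "mixed_lipschitz \<tau> L G" "a \<in> {0..\<tau>}"
  shows "continuous_on {0..\<tau>} (G a)"
  using assms by (auto simp: mixed_lipschitz_def intro: lipschitz_on_continuous_on)

lemma lipschitz_on_integral_wave_kernel:
  assumes tau: "0 < \<tau>" and m: "m \<noteq> 0" and G: "mixed_lipschitz \<tau> L G" and L: "0 \<le> L"
  shows "(pi / \<bar>m\<bar> * (L * (1 + \<tau> * L / 2)))-lipschitz_on {0..\<tau>}
           (\<lambda>a. integral {0..\<tau>} (\<lambda>s. wave m s * G a s))"
proof (rule lipschitz_onI)
  fix a a' assume a: "a \<in> {0..\<tau>}" and a': "a' \<in> {0..\<tau>}"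
  have int: "(\<lambda>s. wave m s * G b s) integrable_on {0..\<tau>}" if "b \<in> {0..\<tau>}" for b
    using G that by (intro integrable_continuous_interval continuous_intros continuous_on_mixed_lipschitz)
  have "integral {0..\<tau>} (\<lambda>s. wave m s * G a s) - integral {0..\<tau>} (\<lambda>s. wave m s * G a' s)
      = integral {0..\<tau>} (\<lambda>s. wave m s * (G a s - G a' s))"
    unfolding right_diff_distrib by (rule integral_diff[OF int[OF a] int[OF a'], symmetric])
  also have "norm \<dots> \<le> pi / \<bar>m\<bar> * (L * \<bar>a - a'\<bar> + \<tau> * (L\<^sup>2 * \<bar>a - a'\<bar>) / 2)"
  proof (rule norm_integral_wave_le[OF tau m])
    fix s assume "s \<in> {0..\<tau>}"
    then show "norm (G a s - G a' s) \<le> L * \<bar>a - a'\<bar>"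
      using G a a' lipschitz_onD[of L "{0..\<tau>}" "\<lambda>a. G a s" a a']
      by (auto simp: mixed_lipschitz_def dist_norm dist_real_def)
  next
    show "(L\<^sup>2 * \<bar>a - a'\<bar>)-lipschitz_on {0..\<tau>} (\<lambda>s. G a s - G a' s)"
      using G a a' by (simp add: mixed_lipschitz_def)
  qed
  finally show "dist (integral {0..\<tau>} (\<lambda>s. wave m s * G a s)) (integral {0..\<tau>} (\<lambda>s. wave m s * G a' s))
      \<le> pi / \<bar>m\<bar> * (L * (1 + \<tau> * L / 2)) * dist a a'"
    by (simp add: dist_norm dist_real_def power2_eq_square algebra_simps)
qed (use tau L in simp)

text \<open>Both variables are integrated with the one-variable bound: the inner integral is small
  and, by the mixed-difference condition, Lipschitz in the outer variable with constant \<open>L\<close> times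
  the same small factor.\<close>
lemma norm_double_integral_wave_le:
  assumes tau: "0 < \<tau>" and m: "m \<noteq> 0" and G: "mixed_lipschitz \<tau> L G" and L: "0 \<le> L"
  shows "norm (integral {0..\<tau>} (\<lambda>a. wave m a * integral {0..\<tau>} (\<lambda>s. wave m s * G a s)))
           \<le> (pi / \<bar>m\<bar> * (1 + \<tau> * L / 2))\<^sup>2"
proof -
  have square: "c * (c * (1 + \<tau> * L / 2) + \<tau> * (c * (L * (1 + \<tau> * L / 2))) / 2)
      = (c * (1 + \<tau> * L / 2))\<^sup>2" for c :: real
    by (simp add: power2_eq_square field_simps)
  have "norm (integral {0..\<tau>} (\<lambda>a. wave m a * integral {0..\<tau>} (\<lambda>s. wave m s * G a s)))
      \<le> pi / \<bar>m\<bar> * (pi / \<bar>m\<bar> * (1 + \<tau> * L / 2) + \<tau> * (pi / \<bar>m\<bar> * (L * (1 + \<tau> * L / 2))) / 2)"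
  proof (rule norm_integral_wave_le[OF tau m _ lipschitz_on_integral_wave_kernel[OF tau m G L]])
    fix a assume a: "a \<in> {0..\<tau>}"
    show "norm (integral {0..\<tau>} (\<lambda>s. wave m s * G a s)) \<le> pi / \<bar>m\<bar> * (1 + \<tau> * L / 2)"
      using G a by (intro norm_integral_wave_le[OF tau m]) (auto simp: mixed_lipschitz_def)
  qed
  then show ?thesis unfolding square .
qed

section \<open>Uniformly distributed shifts\<close>

lemma integral_uniform_measure_Icc:
  fixes \<phi> :: "real \<Rightarrow> 'a::euclidean_space"
  assumes tau: "0 < \<tau>" and \<phi>: "\<phi> \<in> borel_measurable borel" "continuous_on {0..\<tau>} \<phi>"
  shows "(\<integral>x. \<phi> x \<partial>uniform_measure lborel {0..\<tau>}) = integral {0..\<tau>} \<phi> /\<^sub>R \<tau>"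
proof -
  have "uniform_measure lborel {0..\<tau>} = density lborel (\<lambda>x. ennreal (indicator {0..\<tau>} x / \<tau>))"
    unfolding uniform_measure_def using tau
    by (intro arg_cong[where f = "density lborel"] ext)
      (auto split: split_indicator simp: divide_ennreal[symmetric])
  then have "(\<integral>x. \<phi> x \<partial>uniform_measure lborel {0..\<tau>}) = (\<integral>x. (indicator {0..\<tau>} x / \<tau>) *\<^sub>R \<phi> x \<partial>lborel)"
    using \<phi> tau by (simp add: integral_density)
  also have "\<dots> = (LINT x:{0..\<tau>}|lborel. \<phi> x) /\<^sub>R \<tau>"
    by (simp add: set_lebesgue_integral_def divide_inverse_commute flip: integral_scaleR_right)
  also have "(LINT x:{0..\<tau>}|lborel. \<phi> x) = integral {0..\<tau>} \<phi>"
    using \<phi> by (intro set_borel_integral_eq_integral(2))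
      (simp add: set_integrable_def borel_integrable_compact)
  finally show ?thesis .
qed

lemma integral_uniform_measure_pair_Icc:
  fixes f :: "real \<Rightarrow> real \<Rightarrow> complex"
  assumes tau: "0 < \<tau>" and f_meas: "(\<lambda>(a, s). f a s) \<in> borel_measurable (borel \<Otimes>\<^sub>M borel)"
    and bound: "\<And>a s. a \<in> {0..\<tau>} \<Longrightarrow> s \<in> {0..\<tau>} \<Longrightarrow> norm (f a s) \<le> B"
    and inner_cont: "\<And>a. a \<in> {0..\<tau>} \<Longrightarrow> continuous_on {0..\<tau>} (f a)"
    and outer_cont: "continuous_on {0..\<tau>} (\<lambda>a. integral {0..\<tau>} (f a))"
  shows "(\<integral>(a, s). f a s \<partial>(uniform_measure lborel {0..\<tau>} \<Otimes>\<^sub>M uniform_measure lborel {0..\<tau>}))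
           = integral {0..\<tau>} (\<lambda>a. integral {0..\<tau>} (f a)) /\<^sub>R \<tau>\<^sup>2"
proof -
  define U where "U = uniform_measure lborel {0..\<tau>}"
  interpret U: prob_space U
    unfolding U_def using tau by (intro prob_space_uniform_measure) auto
  interpret UU: pair_prob_space U U ..
  have sets_U: "sets U = sets borel" by (simp add: U_def)
  have [measurable]: "(\<lambda>(a, s). f a s) \<in> borel_measurable (U \<Otimes>\<^sub>M U)"
    using f_meas by (simp cong: measurable_cong_sets add: sets_pair_measure_cong[OF sets_U sets_U])
  have in_Icc: "AE a in U. a \<in> {0..\<tau>}"
    unfolding U_def by (rule AE_uniform_measureI) auto
  have "AE p in U \<Otimes>\<^sub>M U. norm ((\<lambda>(a, s). f a s) p) \<le> B"
  proof (rule UU.AE_pair_measure)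
    from in_Icc show "AE a in U. AE s in U. norm ((\<lambda>(a, s). f a s) (a, s)) \<le> B"
      by eventually_elim (use in_Icc bound in \<open>auto elim: eventually_mono\<close>)
  qed measurable
  then have f_int: "integrable (U \<Otimes>\<^sub>M U) (\<lambda>(a, s). f a s)"
    by (rule UU.integrable_const_bound) measurable
  have inner: "(\<integral>s. f a s \<partial>U) = integral {0..\<tau>} (f a) /\<^sub>R \<tau>" if "a \<in> {0..\<tau>}" for a
    unfolding U_def using measurable_Pair2[OF f_meas, of a] inner_cont[OF that]
    by (intro integral_uniform_measure_Icc tau) auto
  have "(\<integral>(a, s). f a s \<partial>(U \<Otimes>\<^sub>M U)) = (\<integral>a. (\<integral>s. f a s \<partial>U) \<partial>U)"
    using UU.integral_fst'[OF f_int] by simp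
  also have "\<dots> = integral {0..\<tau>} (\<lambda>a. \<integral>s. f a s \<partial>U) /\<^sub>R \<tau>"
  proof -
    have "(\<lambda>a. \<integral>s. f a s \<partial>U) \<in> borel_measurable borel"
      by (rule U.borel_measurable_lebesgue_integral)
        (use f_meas in \<open>simp cong: measurable_cong_sets add: sets_pair_measure_cong[OF refl sets_U]\<close>)
    moreover have "continuous_on {0..\<tau>} (\<lambda>a. \<integral>s. f a s \<partial>U)"
      by (rule continuous_on_eq[where f = "\<lambda>a. integral {0..\<tau>} (f a) /\<^sub>R \<tau>"])
        (auto intro!: continuous_intros outer_cont simp: inner)
    ultimately show ?thesis
      unfolding U_def by (rule integral_uniform_measure_Icc[OF tau])
  qed
  also have "integral {0..\<tau>} (\<lambda>a. \<integral>s. f a s \<partial>U)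
      = integral {0..\<tau>} (\<lambda>a. integral {0..\<tau>} (f a) /\<^sub>R \<tau>)"
    by (rule integral_cong) (rule inner)
  also have "\<dots> = integral {0..\<tau>} (\<lambda>a. integral {0..\<tau>} (f a)) /\<^sub>R \<tau>"
    by (rule integral_cmul)
  finally show ?thesis by (simp add: U_def power2_eq_square)
qed

lemma norm_expectation_wave_kernel_le:
  assumes tau: "0 < \<tau>" and m: "m \<noteq> 0" and G: "mixed_lipschitz \<tau> L G" and L: "0 \<le> L"
    and G_meas: "(\<lambda>(a, s). G a s) \<in> borel_measurable (borel \<Otimes>\<^sub>M borel)"
  shows "norm (\<integral>(a, s). wave m a * wave m s * G a s
            \<partial>(uniform_measure lborel {0..\<tau>} \<Otimes>\<^sub>M uniform_measure lborel {0..\<tau>}))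
           \<le> (pi / \<bar>m\<bar> * (1 / \<tau> + L / 2))\<^sup>2"
proof -
  define \<Phi> where "\<Phi> a = integral {0..\<tau>} (\<lambda>s. wave m s * G a s)" for a
  have inner: "integral {0..\<tau>} (\<lambda>s. wave m a * wave m s * G a s) = wave m a * \<Phi> a" for a
    by (simp add: \<Phi>_def mult.assoc)
  have \<Phi>_cont: "continuous_on {0..\<tau>} \<Phi>"
    unfolding \<Phi>_def
    by (rule lipschitz_on_continuous_on[OF lipschitz_on_integral_wave_kernel[OF tau m G L]])
  have "(\<integral>(a, s). wave m a * wave m s * G a s
          \<partial>(uniform_measure lborel {0..\<tau>} \<Otimes>\<^sub>M uniform_measure lborel {0..\<tau>}))
      = integral {0..\<tau>} (\<lambda>a. integral {0..\<tau>} (\<lambda>s. wave m a * wave m s * G a s)) /\<^sub>R \<tau>\<^sup>2"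
  proof (rule integral_uniform_measure_pair_Icc[OF tau, where B = 1])
    have [measurable]: "(\<lambda>p. G (fst p) (snd p)) \<in> borel_measurable (borel \<Otimes>\<^sub>M borel)"
      using G_meas by (simp add: split_beta')
    show "(\<lambda>(a, s). wave m a * wave m s * G a s) \<in> borel_measurable (borel \<Otimes>\<^sub>M borel)"
      unfolding split_beta' by measurable
    show "norm (wave m a * wave m s * G a s) \<le> 1" if "a \<in> {0..\<tau>}" "s \<in> {0..\<tau>}" for a s
      using G that by (simp add: mixed_lipschitz_def norm_mult)
    show "continuous_on {0..\<tau>} (\<lambda>s. wave m a * wave m s * G a s)" if "a \<in> {0..\<tau>}" for a
      by (intro continuous_intros continuous_on_mixed_lipschitz[OF G that])
    show "continuous_on {0..\<tau>} (\<lambda>a. integral {0..\<tau>} (\<lambda>s. wave m a * wave m s * G a s))"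
      unfolding inner by (intro continuous_intros \<Phi>_cont)
  qed
  then have "(\<integral>(a, s). wave m a * wave m s * G a s
          \<partial>(uniform_measure lborel {0..\<tau>} \<Otimes>\<^sub>M uniform_measure lborel {0..\<tau>}))
      = integral {0..\<tau>} (\<lambda>a. wave m a * \<Phi> a) /\<^sub>R \<tau>\<^sup>2"
    by (simp only: inner)
  then have "norm (\<integral>(a, s). wave m a * wave m s * G a s
          \<partial>(uniform_measure lborel {0..\<tau>} \<Otimes>\<^sub>M uniform_measure lborel {0..\<tau>}))
      = norm (integral {0..\<tau>} (\<lambda>a. wave m a * \<Phi> a)) / \<tau>\<^sup>2"
    using tau by (simp add: field_simps)
  also have "\<dots> \<le> (pi / \<bar>m\<bar> * (1 + \<tau> * L / 2))\<^sup>2 / \<tau>\<^sup>2"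
    unfolding \<Phi>_def using tau by (intro divide_right_mono norm_double_integral_wave_le m G L) auto
  also have "\<dots> = (pi / \<bar>m\<bar> * ((1 + \<tau> * L / 2) / \<tau>))\<^sup>2"
    by (simp add: power_divide power_mult_distrib)
  also have "(1 + \<tau> * L / 2) / \<tau> = 1 / \<tau> + L / 2"
    using tau by (simp add: field_simps)
  finally show ?thesis .
qed

section \<open>Expectations of products of integrals\<close>

lemma nn_integral_prod_components_le:
  fixes g :: "'i \<Rightarrow> 'b \<Rightarrow> real"
  assumes "sigma_finite_measure M" "finite J"
    and g_meas: "\<And>i. i \<in> J \<Longrightarrow> g i \<in> borel_measurable M" and g_nonneg: "\<And>i z. 0 \<le> g i z"
    and g_int: "\<And>i. i \<in> J \<Longrightarrow> (\<integral>\<^sup>+z. g i z \<partial>M) \<le> ennreal \<alpha>"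
  shows "(\<integral>\<^sup>+y. (\<Prod>i\<in>J. g i (y i)) \<partial>Pi\<^sub>M J (\<lambda>_. M)) \<le> ennreal \<alpha> ^ card J"
proof -
  interpret product_sigma_finite "\<lambda>_. M"
    using assms(1) by (simp add: product_sigma_finite_def)
  have "(\<integral>\<^sup>+y. (\<Prod>i\<in>J. g i (y i)) \<partial>Pi\<^sub>M J (\<lambda>_. M)) = (\<integral>\<^sup>+y. (\<Prod>i\<in>J. ennreal (g i (y i))) \<partial>Pi\<^sub>M J (\<lambda>_. M))"
    by (simp add: prod_ennreal g_nonneg)
  also have "\<dots> = (\<Prod>i\<in>J. \<integral>\<^sup>+z. g i z \<partial>M)"
    using assms(2) g_meas by (intro product_nn_integral_prod) auto
  also have "\<dots> \<le> (\<Prod>i\<in>J. ennreal \<alpha>)"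
    using g_int by (intro prod_mono_ennreal) auto
  finally show ?thesis by simp
qed

lemma measurable_prod_components:
  fixes F :: "'i \<Rightarrow> 'a \<Rightarrow> 'b \<Rightarrow> complex"
  assumes F_meas: "\<And>i. i \<in> J \<Longrightarrow> (\<lambda>(t, z). F i t z) \<in> borel_measurable (Q \<Otimes>\<^sub>M M)"
  shows "(\<lambda>(t, y). \<Prod>i\<in>J. F i t (y i)) \<in> borel_measurable (Q \<Otimes>\<^sub>M Pi\<^sub>M J (\<lambda>_. M))"
proof -
  have "(\<lambda>p. F i (fst p) (snd p i)) \<in> borel_measurable (Q \<Otimes>\<^sub>M Pi\<^sub>M J (\<lambda>_. M))" if "i \<in> J" for i
  proof -
    have "(\<lambda>p. (fst p, snd p i)) \<in> Q \<Otimes>\<^sub>M Pi\<^sub>M J (\<lambda>_. M) \<rightarrow>\<^sub>M Q \<Otimes>\<^sub>M M"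
      using that by measurable
    from measurable_compose[OF this F_meas[OF that]] show ?thesis by simp
  qed
  then show ?thesis
    unfolding split_beta' by (rule borel_measurable_prod)
qed

context
  fixes Q M :: "_ measure" and J :: "'i set" and F :: "'i \<Rightarrow> 'a \<Rightarrow> 'b \<Rightarrow> complex"
    and g :: "'i \<Rightarrow> 'b \<Rightarrow> real" and \<alpha> :: real
  assumes Q: "prob_space Q" and M: "sigma_finite_measure M" and J: "finite J"
    and F_meas: "\<And>i. i \<in> J \<Longrightarrow> (\<lambda>(t, z). F i t z) \<in> borel_measurable (Q \<Otimes>\<^sub>M M)"
    and g_meas: "\<And>i. i \<in> J \<Longrightarrow> g i \<in> borel_measurable M" and g_nonneg: "\<And>i z. 0 \<le> g i z"
    and dom: "AE t in Q. \<forall>i\<in>J. \<forall>z\<in>space M. norm (F i t z) \<le> g i z"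
    and g_int: "\<And>i. i \<in> J \<Longrightarrow> (\<integral>\<^sup>+z. g i z \<partial>M) \<le> ennreal \<alpha>"
    and alpha: "0 \<le> \<alpha>"
begin

lemma integrable_prod_components:
  "integrable (Q \<Otimes>\<^sub>M Pi\<^sub>M J (\<lambda>_. M)) (\<lambda>(t, y). \<Prod>i\<in>J. F i t (y i))"
proof (rule integrableI_bounded[OF measurable_prod_components[where F = F and J = J, OF F_meas]])
  interpret Q: prob_space Q by (rule Q)
  interpret product_sigma_finite "\<lambda>_. M"
    using M by (simp add: product_sigma_finite_def)
  interpret P: sigma_finite_measure "Pi\<^sub>M J (\<lambda>_. M)"
    using J by (rule sigma_finite)
  have "AE t in Q. \<forall>y\<in>space (Pi\<^sub>M J (\<lambda>_. M)). norm (\<Prod>i\<in>J. F i t (y i)) \<le> (\<Prod>i\<in>J. g i (y i))"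
    using dom by eventually_elim (auto simp: space_PiM prod_norm[symmetric] intro!: prod_mono)
  then have "(\<integral>\<^sup>+t. \<integral>\<^sup>+y. norm (\<Prod>i\<in>J. F i t (y i)) \<partial>Pi\<^sub>M J (\<lambda>_. M) \<partial>Q)
      \<le> (\<integral>\<^sup>+t. \<integral>\<^sup>+y. (\<Prod>i\<in>J. g i (y i)) \<partial>Pi\<^sub>M J (\<lambda>_. M) \<partial>Q)"
    by (intro nn_integral_mono_AE) (auto elim!: eventually_mono intro!: nn_integral_mono ennreal_leI)
  also have "\<dots> < \<infinity>"
    using nn_integral_prod_components_le[where g = g and \<alpha> = \<alpha>, OF M J g_meas g_nonneg g_int]
    by (simp add: Q.emeasure_space_1 ennreal_power alpha le_less_trans)
  finally show "(\<integral>\<^sup>+p. norm ((\<lambda>(t, y). \<Prod>i\<in>J. F i t (y i)) p) \<partial>(Q \<Otimes>\<^sub>M Pi\<^sub>M J (\<lambda>_. M))) < \<infinity>"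
    using measurable_prod_components[where F = F and J = J, OF F_meas]
    by (subst P.nn_integral_fst[symmetric]) (auto simp: split_beta')
qed

lemma AE_prod_integrals_eq:
  "AE t in Q. (\<Prod>i\<in>J. \<integral>z. F i t z \<partial>M) = (\<integral>y. (\<Prod>i\<in>J. F i t (y i)) \<partial>Pi\<^sub>M J (\<lambda>_. M))"
  using dom AE_space
proof eventually_elim
  case (elim t)
  interpret product_sigma_finite "\<lambda>_. M"
    using M by (simp add: product_sigma_finite_def)
  have "integrable M (F i t)" if "i \<in> J" for i
  proof (rule integrableI_bounded)
    show "F i t \<in> borel_measurable M"
      using measurable_Pair2[OF F_meas[OF that] elim(2)] by simp
    have "(\<integral>\<^sup>+z. norm (F i t z) \<partial>M) \<le> (\<integral>\<^sup>+z. g i z \<partial>M)"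
      using elim that by (intro nn_integral_mono ennreal_leI) auto
    also have "\<dots> < \<infinity>" using g_int[OF that] by (simp add: le_less_trans)
    finally show "(\<integral>\<^sup>+z. norm (F i t z) \<partial>M) < \<infinity>" .
  qed
  then show ?case
    using product_integral_prod[OF J, of "\<lambda>i. F i t"] by simp
qed

lemma norm_expectation_prod_integrals_le:
  assumes pointwise: "\<And>y. norm (\<integral>t. (\<Prod>i\<in>J. F i t (y i)) \<partial>Q) \<le> K * (\<Prod>i\<in>J. g i (y i))"
    and "0 \<le> K"
  shows "norm (\<integral>t. (\<Prod>i\<in>J. \<integral>z. F i t z \<partial>M) \<partial>Q) \<le> K * \<alpha> ^ card J"
proof -
  interpret Q: prob_space Q by (rule Q)
  interpret M: sigma_finite_measure M by (rule M)
  define P where "P = Pi\<^sub>M J (\<lambda>_. M)"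
  interpret P: sigma_finite_measure P
    unfolding P_def using J M by (intro product_sigma_finite.sigma_finite) (auto simp: product_sigma_finite_def)
  interpret QP: pair_sigma_finite Q P ..
  define \<Psi> where "\<Psi> t y = (\<Prod>i\<in>J. F i t (y i))" for t y
  have \<Psi>_meas: "(\<lambda>(t, y). \<Psi> t y) \<in> borel_measurable (Q \<Otimes>\<^sub>M P)"
    unfolding \<Psi>_def P_def by (rule measurable_prod_components[where F = F and J = J, OF F_meas])
  have \<Psi>_int: "integrable (Q \<Otimes>\<^sub>M P) (\<lambda>(t, y). \<Psi> t y)"
    unfolding \<Psi>_def P_def by (rule integrable_prod_components)
  have "(\<integral>t. (\<Prod>i\<in>J. \<integral>z. F i t z \<partial>M) \<partial>Q) = (\<integral>t. (\<integral>y. \<Psi> t y \<partial>P) \<partial>Q)"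
  proof (rule integral_cong_AE)
    show "(\<lambda>t. \<Prod>i\<in>J. \<integral>z. F i t z \<partial>M) \<in> borel_measurable Q"
      using F_meas by (intro borel_measurable_prod M.borel_measurable_lebesgue_integral) auto
    show "(\<lambda>t. \<integral>y. \<Psi> t y \<partial>P) \<in> borel_measurable Q"
      using \<Psi>_meas by (rule P.borel_measurable_lebesgue_integral)
    show "AE t in Q. (\<Prod>i\<in>J. \<integral>z. F i t z \<partial>M) = (\<integral>y. \<Psi> t y \<partial>P)"
      unfolding \<Psi>_def P_def by (rule AE_prod_integrals_eq)
  qed
  also have "\<dots> = (\<integral>y. (\<integral>t. \<Psi> t y \<partial>Q) \<partial>P)"
    using QP.Fubini_integral[OF \<Psi>_int] by simp
  finally have "ennreal (norm (\<integral>t. (\<Prod>i\<in>J. \<integral>z. F i t z \<partial>M) \<partial>Q))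
      \<le> (\<integral>\<^sup>+y. norm (\<integral>t. \<Psi> t y \<partial>Q) \<partial>P)"
    using QP.integrable_snd[OF \<Psi>_int] by (simp add: integral_norm_bound_ennreal)
  also have "\<dots> \<le> (\<integral>\<^sup>+y. ennreal K * (\<Prod>i\<in>J. g i (y i)) \<partial>P)"
    using pointwise \<open>0 \<le> K\<close>
    by (intro nn_integral_mono) (simp add: \<Psi>_def ennreal_mult'[symmetric] ennreal_leI)
  also have "\<dots> \<le> ennreal K * ennreal (\<alpha> ^ card J)"
    using nn_integral_prod_components_le[where g = g and \<alpha> = \<alpha>, OF M J g_meas g_nonneg g_int] g_meas
    by (simp add: P_def nn_integral_cmult mult_left_mono ennreal_power alpha)
  finally show ?thesis
    using \<open>0 \<le> K\<close> alpha by (simp add: ennreal_mult'[symmetric])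
qed

end

section \<open>The four shifted intervals\<close>

lemma set_integral_translate_lborel:
  fixes f :: "real \<Rightarrow> complex"
  shows "set_lebesgue_integral lborel ((\<lambda>x. x + c) ` A) f = (\<integral>z. indicator A z *\<^sub>R f (z + c) \<partial>lborel)"
proof -
  have indicator_shift: "indicator ((\<lambda>x. x + c) ` A) (x + c) = (indicator A x :: real)" for x
    by (auto split: split_indicator)
  have "set_lebesgue_integral lborel ((\<lambda>x. x + c) ` A) f
      = \<bar>1\<bar> *\<^sub>R (\<integral>x. indicator ((\<lambda>x. x + c) ` A) (c + 1 * x) *\<^sub>R f (c + 1 * x) \<partial>lborel)"
    unfolding set_lebesgue_integral_def by (rule lborel_integral_real_affine) simp
  then show ?thesis by (simp add: indicator_shift add.commute)
qed

lemma convex_thicken: "is_interval I \<Longrightarrow> convex (thicken I \<tau>)"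
proof -
  assume "is_interval I"
  have "thicken I \<tau> = (\<Union>x\<in>I. \<Union>y\<in>{-\<tau>..\<tau>}. {x + y})" unfolding thicken_def by blast
  then show ?thesis
    using convex_sums[OF is_interval_convex[OF \<open>is_interval I\<close>] convex_real_interval(5)] by simp
qed

lemma in_thicken: "x \<in> I \<Longrightarrow> d \<in> {-\<tau>..\<tau>} \<Longrightarrow> x + d \<in> thicken I \<tau>"
  unfolding thicken_def by blast

lemma prod_atLeast1_atMost4: "(\<Prod>i\<in>{1..4::nat}. f i) = f 1 * f 2 * f 3 * f 4"
proof -
  have "{1..4::nat} = {1, 2, 3, 4}" by auto
  then show ?thesis by (simp add: mult.assoc)
qed

definition cover_idx :: "nat \<Rightarrow> nat" where
  "cover_idx i = (if i = 4 then 3 else i)"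

definition cofactor :: "(nat \<Rightarrow> real \<Rightarrow> complex) \<Rightarrow> nat \<Rightarrow> real \<Rightarrow> real \<Rightarrow> real \<Rightarrow> complex" where
  "cofactor h i a s z =
     (if i = 1 then h 2 (z + a - s) * h 3 (z + a)
      else if i = 2 then h 1 (z + s - a) * h 3 (z + s)
      else h 1 (z - a) * h 2 (z - s))"

lemma fprod_shift_eq:
  assumes "i \<in> {1..4}"
  shows "fprod h a s (z + tshift a s i) * wave m (z + tshift a s i)
           = h (cover_idx i) z * wave m z * (wave m (tshift a s i) * cofactor h i a s z)"
proof -
  have "i = 1 \<or> i = 2 \<or> i = 3 \<or> i = 4" using assms by auto
  then show ?thesis
    by (elim disjE) (simp_all add: fprod_def tshift_def cover_idx_def cofactor_def wave_add algebra_simps)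
qed

lemma mixed_lipschitz_cofactor:
  assumes "0 \<le> \<beta>" "is_interval I" "z \<in> I" "i \<in> {1..4}"
    and C2: "\<And>j. j \<in> {1..3} \<Longrightarrow> \<not> idx_sub i j \<Longrightarrow> C2_unimod_on (h j) (thicken I \<tau>) \<beta>"
  shows "mixed_lipschitz \<tau> (\<beta> + \<beta>) (\<lambda>a s. cofactor h i a s z)"
proof -
  have factor: "mixed_lipschitz \<tau> \<beta> (\<lambda>a s. h j (z + p * a + q * s))"
    if "j \<in> {1..3}" "\<not> idx_sub i j" "\<bar>p\<bar> \<le> 1" "\<bar>q\<bar> \<le> 1"
      and range: "\<And>a s. a \<in> {0..\<tau>} \<Longrightarrow> s \<in> {0..\<tau>} \<Longrightarrow> p * a + q * s \<in> {-\<tau>..\<tau>}" for j p q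
    using that(3,4) \<open>0 \<le> \<beta>\<close> in_thicken[OF \<open>z \<in> I\<close> range]
    by (intro mixed_lipschitz_C2_unimod_affine[OF C2[OF that(1,2)] convex_thicken[OF \<open>is_interval I\<close>]])
      (auto simp: add.assoc)
  consider "i = 1" | "i = 2" | "i = 3 \<or> i = 4" using \<open>i \<in> {1..4}\<close> by force
  then show ?thesis
  proof cases
    case 1
    have "mixed_lipschitz \<tau> (\<beta> + \<beta>) (\<lambda>a s. h 2 (z + 1 * a + (-1) * s) * h 3 (z + 1 * a + 0 * s))"
      using \<open>0 \<le> \<beta>\<close> by (intro mixed_lipschitz_mult factor) (auto simp: 1 idx_sub_def)
    then show ?thesis by (simp add: cofactor_def 1 algebra_simps)
  next
    case 2
    have "mixed_lipschitz \<tau> (\<beta> + \<beta>) (\<lambda>a s. h 1 (z + (-1) * a + 1 * s) * h 3 (z + 0 * a + 1 * s))"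
      using \<open>0 \<le> \<beta>\<close> by (intro mixed_lipschitz_mult factor) (auto simp: 2 idx_sub_def)
    then show ?thesis by (simp add: cofactor_def 2 algebra_simps)
  next
    case 3
    have "mixed_lipschitz \<tau> (\<beta> + \<beta>) (\<lambda>a s. h 1 (z + (-1) * a + 0 * s) * h 2 (z + 0 * a + (-1) * s))"
      using \<open>0 \<le> \<beta>\<close> 3 by (intro mixed_lipschitz_mult factor) (auto simp: idx_sub_def)
    then show ?thesis using 3 by (auto simp: cofactor_def algebra_simps)
  qed
qed

locale shifted_product_setting =
  fixes I :: "nat \<Rightarrow> real set" and h :: "nat \<Rightarrow> real \<Rightarrow> complex" and \<tau> \<alpha> \<beta> m :: real
  assumes intervals: "\<forall>i\<in>{1..4}. is_interval (I i)"
    and tau_pos: "\<tau> > 0" and alpha_pos: "\<alpha> > 0" and beta_pos: "\<beta> > 0"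
    and h_measurable: "\<forall>j\<in>{1..3}. h j \<in> borel_measurable lborel"
    and integral_bound: "\<forall>i\<in>{1..4}. \<forall>j\<in>{1..3}. idx_sub i j \<longrightarrow>
        (\<integral>\<^sup>+ x\<in>I i. ennreal (norm (h j x)) \<partial>lborel) \<le> ennreal \<alpha>"
    and smooth: "\<forall>i\<in>{1..4}. \<forall>j\<in>{1..3}. \<not> idx_sub i j \<longrightarrow> C2_unimod_on (h j) (thicken (I i) \<tau>) \<beta>"
    and m_nonzero: "m \<noteq> 0"
begin

abbreviation U :: "real measure" where
  "U \<equiv> uniform_measure lborel {0..\<tau>}"

definition integrand :: "nat \<Rightarrow> real \<times> real \<Rightarrow> real \<Rightarrow> complex" where
  "integrand i t z = indicator (I i) z *\<^sub>R
     (fprod h (fst t) (snd t) (z + tshift (fst t) (snd t) i) * wave m (z + tshift (fst t) (snd t) i))"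

definition majorant :: "nat \<Rightarrow> real \<Rightarrow> real" where
  "majorant i z = indicator (I i) z * norm (h (cover_idx i) z)"

lemma measurable_h [measurable]:
  "h 1 \<in> borel_measurable borel" "h 2 \<in> borel_measurable borel" "h 3 \<in> borel_measurable borel"
  using h_measurable by auto

lemma sets_I: "i \<in> {1..4} \<Longrightarrow> I i \<in> sets borel"
  using intervals by (auto intro: real_interval_borel_measurable)

lemma sets_U_pair: "sets (U \<Otimes>\<^sub>M U) = sets (borel \<Otimes>\<^sub>M borel)"
  by (intro sets_pair_measure_cong) simp_all

lemma AE_shifts_in_square: "AE t in U \<Otimes>\<^sub>M U. t \<in> {0..\<tau>} \<times> {0..\<tau>}"
proof -
  interpret U: prob_space U
    using tau_pos by (intro prob_space_uniform_measure) auto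
  interpret UU: pair_prob_space U U ..
  have in_Icc: "AE a in U. a \<in> {0..\<tau>}"
    by (rule AE_uniform_measureI) auto
  show ?thesis
  proof (rule UU.AE_pair_measure)
    show "{t \<in> space (U \<Otimes>\<^sub>M U). t \<in> {0..\<tau>} \<times> {0..\<tau>}} \<in> sets (U \<Otimes>\<^sub>M U)"
      unfolding sets_U_pair by (simp add: space_pair_measure)
    from in_Icc show "AE a in U. AE s in U. (a, s) \<in> {0..\<tau>} \<times> {0..\<tau>}"
      by eventually_elim (use in_Icc in \<open>auto elim: eventually_mono\<close>)
  qed
qed

lemma measurable_integrand:
  assumes "i \<in> {1..4}"
  shows "(\<lambda>(t, z). integrand i t z) \<in> borel_measurable ((U \<Otimes>\<^sub>M U) \<Otimes>\<^sub>M lborel)"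
proof -
  have [measurable]: "I i \<in> sets borel" using sets_I[OF assms] .
  have [measurable]: "(\<lambda>t. tshift (fst t) (snd t) i) \<in> borel_measurable (borel \<Otimes>\<^sub>M borel)"
    by (simp add: tshift_def)
  have "(\<lambda>(t, z). integrand i t z) \<in> borel_measurable ((borel \<Otimes>\<^sub>M borel) \<Otimes>\<^sub>M borel)"
    unfolding integrand_def fprod_def split_beta' by measurable
  then show ?thesis
    by (simp cong: measurable_cong_sets add: sets_pair_measure_cong[OF sets_U_pair])
qed

lemma measurable_majorant: "i \<in> {1..4} \<Longrightarrow> majorant i \<in> borel_measurable lborel"
proof -
  assume i: "i \<in> {1..4}"
  have [measurable]: "I i \<in> sets borel" using sets_I[OF i] .
  have [measurable]: "h (cover_idx i) \<in> borel_measurable borel"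
    using h_measurable i by (auto simp: cover_idx_def)
  show ?thesis unfolding majorant_def[abs_def] by measurable
qed

lemma majorant_nonneg: "0 \<le> majorant i z"
  by (simp add: majorant_def)

lemma mixed_lipschitz_cofactor_at:
  "i \<in> {1..4} \<Longrightarrow> z \<in> I i \<Longrightarrow> mixed_lipschitz \<tau> (\<beta> + \<beta>) (\<lambda>a s. cofactor h i a s z)"
  using beta_pos intervals smooth by (intro mixed_lipschitz_cofactor) auto

lemma norm_integrand_le:
  assumes "i \<in> {1..4}" "t \<in> {0..\<tau>} \<times> {0..\<tau>}"
  shows "norm (integrand i t z) \<le> majorant i z"
proof (cases "z \<in> I i")
  case True
  have "norm (cofactor h i (fst t) (snd t) z) \<le> 1"
    using mixed_lipschitz_cofactor_at[OF assms(1) True] assms(2)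
    by (auto simp: mixed_lipschitz_def)
  then show ?thesis
    using True by (simp add: integrand_def majorant_def fprod_shift_eq[OF assms(1)] norm_mult mult_left_le)
qed (simp add: integrand_def majorant_def)

lemma majorant_integral_le: "i \<in> {1..4} \<Longrightarrow> (\<integral>\<^sup>+z. majorant i z \<partial>lborel) \<le> ennreal \<alpha>"
proof -
  assume i: "i \<in> {1..4}"
  then have "cover_idx i \<in> {1..3}" "idx_sub i (cover_idx i)"
    by (auto simp: cover_idx_def idx_sub_def)
  then have "(\<integral>\<^sup>+ x\<in>I i. ennreal (norm (h (cover_idx i) x)) \<partial>lborel) \<le> ennreal \<alpha>"
    using integral_bound i by blast
  moreover have "ennreal (majorant i z) = ennreal (norm (h (cover_idx i) z)) * indicator (I i) z" for z
    by (simp add: majorant_def split: split_indicator)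
  ultimately show ?thesis by simp
qed

lemma prod_wave_tshift: "(\<Prod>i\<in>{1..4}. wave m (tshift a s i)) = wave m a * wave m s"
  by (simp only: prod_atLeast1_atMost4) (simp add: tshift_def)

lemma norm_expectation_integrand_prod_le:
  "norm (\<integral>t. (\<Prod>i\<in>{1..4}. integrand i t (y i)) \<partial>(U \<Otimes>\<^sub>M U))
     \<le> (pi / \<bar>m\<bar> * (1 / \<tau> + 4 * \<beta>))\<^sup>2 * (\<Prod>i\<in>{1..4}. majorant i (y i))"
proof (cases "\<forall>i\<in>{1..4}. y i \<in> I i")
  case False
  then obtain i where "i \<in> {1..4}" "y i \<notin> I i" by blast
  then have "(\<lambda>t. \<Prod>i\<in>{1..4}. integrand i t (y i)) = (\<lambda>t. 0)"
    by (intro ext prod_zero bexI[of _ i]) (auto simp: integrand_def)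
  then show ?thesis by (simp add: majorant_nonneg prod_nonneg)
next
  case True
  define c where "c = (\<Prod>i\<in>{1..4}. h (cover_idx i) (y i) * wave m (y i))"
  define G where "G a s = (\<Prod>i\<in>{1..4}. cofactor h i a s (y i))" for a s
  have factor: "integrand i t (y i) = h (cover_idx i) (y i) * wave m (y i)
      * (wave m (tshift (fst t) (snd t) i) * cofactor h i (fst t) (snd t) (y i))"
    if "i \<in> {1..4}" for i t
    using True that by (simp add: integrand_def fprod_shift_eq)
  have "(\<Prod>i\<in>{1..4}. integrand i t (y i)) = c * (wave m (fst t) * wave m (snd t) * G (fst t) (snd t))" for t
    by (simp only: prod.cong[OF refl factor] prod.distrib prod_wave_tshift c_def G_def)
  then have "norm (\<integral>t. (\<Prod>i\<in>{1..4}. integrand i t (y i)) \<partial>(U \<Otimes>\<^sub>M U))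
      = norm c * norm (\<integral>(a, s). wave m a * wave m s * G a s \<partial>(U \<Otimes>\<^sub>M U))"
    by (simp add: split_beta' norm_mult)
  also have "\<dots> \<le> norm c * (pi / \<bar>m\<bar> * (1 / \<tau> + (\<Sum>i\<in>{1..4::nat}. \<beta> + \<beta>) / 2))\<^sup>2"
  proof (intro mult_left_mono norm_expectation_wave_kernel_le tau_pos m_nonzero)
    show "mixed_lipschitz \<tau> (\<Sum>i\<in>{1..4::nat}. \<beta> + \<beta>) G"
      unfolding G_def using True beta_pos
      by (intro mixed_lipschitz_prod mixed_lipschitz_cofactor_at) auto
    show "(\<lambda>(a, s). G a s) \<in> borel_measurable (borel \<Otimes>\<^sub>M borel)"
      unfolding G_def cofactor_def split_beta' by measurable
  qed (use beta_pos in auto)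
  also have "norm c = (\<Prod>i\<in>{1..4}. majorant i (y i))"
    using True by (simp add: c_def majorant_def prod_norm[symmetric] norm_mult)
  finally show ?thesis by (simp add: mult.commute)
qed

lemma norm_expectation_le:
  "norm (integral\<^sup>L (U \<Otimes>\<^sub>M U)
      (\<lambda>(t1, t2). \<Prod>i\<in>{1..4::nat}.
         set_lebesgue_integral lborel ((\<lambda>x. x + tshift t1 t2 i) ` I i)
           (\<lambda>x. fprod h t1 t2 x * exp (- \<i> * complex_of_real (m * x)))))
    \<le> 25 * pi\<^sup>2 * \<alpha> ^ 4 / m\<^sup>2 * (max \<beta> (1 / \<tau>))\<^sup>2"
proof -
  define K where "K = (pi / \<bar>m\<bar> * (1 / \<tau> + 4 * \<beta>))\<^sup>2"
  have "(\<lambda>(t1, t2). \<Prod>i\<in>{1..4::nat}. set_lebesgue_integral lborel ((\<lambda>x. x + tshift t1 t2 i) ` I i)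
           (\<lambda>x. fprod h t1 t2 x * exp (- \<i> * complex_of_real (m * x))))
      = (\<lambda>t. \<Prod>i\<in>{1..4}. \<integral>z. integrand i t z \<partial>lborel)"
    by (simp add: set_integral_translate_lborel integrand_def wave_def split_beta')
  moreover have "norm (\<integral>t. (\<Prod>i\<in>{1..4}. \<integral>z. integrand i t z \<partial>lborel) \<partial>(U \<Otimes>\<^sub>M U))
      \<le> K * \<alpha> ^ card {1..4::nat}"
  proof (rule norm_expectation_prod_integrals_le)
    show "prob_space (U \<Otimes>\<^sub>M U)"
      using tau_pos by (intro prob_space_pair prob_space_uniform_measure) auto
    show "AE t in U \<Otimes>\<^sub>M U. \<forall>i\<in>{1..4}. \<forall>z\<in>space lborel. norm (integrand i t z) \<le> majorant i z"
      using AE_shifts_in_square by eventually_elim (auto intro: norm_integrand_le)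
  qed (use measurable_integrand measurable_majorant majorant_nonneg majorant_integral_le
      norm_expectation_integrand_prod_le alpha_pos in \<open>auto simp: K_def lborel.sigma_finite_measure_axioms\<close>)
  moreover have "K \<le> 25 * pi\<^sup>2 / m\<^sup>2 * (max \<beta> (1 / \<tau>))\<^sup>2"
  proof -
    have "0 \<le> 1 / \<tau> + 4 * \<beta>" "1 / \<tau> + 4 * \<beta> \<le> 5 * max \<beta> (1 / \<tau>)"
      using tau_pos beta_pos by (auto simp: max_def)
    then have "K \<le> (pi / \<bar>m\<bar> * (5 * max \<beta> (1 / \<tau>)))\<^sup>2"
      unfolding K_def by (intro power_mono mult_left_mono) auto
    then show ?thesis by (simp add: power_mult_distrib power_divide mult.commute mult.left_commute)
  qed
  then have "K * \<alpha> ^ 4 \<le> 25 * pi\<^sup>2 / m\<^sup>2 * (max \<beta> (1 / \<tau>))\<^sup>2 * \<alpha> ^ 4"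
    using alpha_pos by (intro mult_right_mono) auto
  ultimately show ?thesis by (simp add: mult_ac)
qed

end

theorem mainTheorem9:
  shows "\<exists>C::real. \<forall>(I :: nat \<Rightarrow> real set) (h :: nat \<Rightarrow> real \<Rightarrow> complex) (\<tau>::real) (\<alpha>::real) (\<beta>::real) (m::real).
    (\<forall>i\<in>{1..4}. is_interval (I i)) \<longrightarrow> \<tau> > 0 \<longrightarrow> \<alpha> > 0 \<longrightarrow> \<beta> > 0 \<longrightarrow>
    (\<forall>j\<in>{1..3}. h j \<in> borel_measurable lborel) \<longrightarrow>
    (\<forall>i\<in>{1..4}. \<forall>j\<in>{1..3}. idx_sub i j \<longrightarrow>
        (\<integral>\<^sup>+ x\<in>I i. ennreal (norm (h j x)) \<partial>lborel) \<le> ennreal \<alpha>) \<longrightarrow>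
    (\<forall>i\<in>{1..4}. \<forall>j\<in>{1..3}. \<not> idx_sub i j \<longrightarrow> C2_unimod_on (h j) (thicken (I i) \<tau>) \<beta>) \<longrightarrow>
    m \<noteq> 0 \<longrightarrow>
    norm (integral\<^sup>L (uniform_measure lborel {0..\<tau>} \<Otimes>\<^sub>M uniform_measure lborel {0..\<tau>})
            (\<lambda>(t1, t2). \<Prod>i\<in>{1..4::nat}.
               set_lebesgue_integral lborel ((\<lambda>x. x + tshift t1 t2 i) ` I i)
                 (\<lambda>x. fprod h t1 t2 x * exp (- \<i> * complex_of_real (m * x)))))
      \<le> C * \<alpha> ^ 4 / m\<^sup>2 * (max \<beta> (1 / \<tau>))\<^sup>2"
  by (intro exI[of _ "25 * pi\<^sup>2"] allI impI shifted_product_setting.norm_expectation_le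
      shifted_product_setting.intro)

end
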